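(* Let $p \ge 1$, let $\mathcal{Y}=\{1,\dots,C\}$, and let $f:\mathbb{R}^d\to\mathcal{Y}$ be a base classifier written as a composition $f = f_{\mathrm{R}}\circ f_{\mathrm{L}}$ with $f_{\mathrm{L}}:\mathbb{R}^d\to\mathbb{R}^m$ and $f_{\mathrm{R}}:\mathbb{R}^m\to\mathcal{Y}$. Fix $\sigma>0$ and define the SPLITZ classifier $$g_{\mathrm{SPLITZ}}(x)=\arg\max_{c\in\mathcal{Y}}\ \mathbb{P}_{\delta\sim\mathcal{N}(0,\sigma^2 I)}\big(f_{\mathrm{R}}(f_{\mathrm{L}}(x)+\delta)=c\big),$$ and the smoothed right half $\tilde g(u)=\arg\max_{c\in\mathcal{Y}}\mathbb{P}_{\delta\sim\mathcal{N}(0,\sigma^2 I)}\big(f_{\mathrm{R}}(u+\delta)=c\big)$, so that $g_{\mathrm{SPLITZ}}=\tilde g\circ f_{\mathrm{L}}$. For an input $x$, let $L^{(\gamma)}_{f_{\mathrm{L}}}(x)$ denote the $\gamma$-local Lipschitz constant of $f_{\mathrm{L}}$ at $x$, and let $R_{f_{\mathrm{R}}}(f_{\mathrm{L}}(x))$ denote a certified radius of $f_{\mathrm{R}}$ at the input $f_{\mathrm{L}}(x)$ holding with probability at least $1-\alpha$, i.e. with probability at least $1-\alpha$, $\tilde g(u')=\tilde g(f_{\mathrm{L}}(x))$ for all $u'$ with $\|u'-f_{\mathrm{L}}(x)\|_p\le R_{f_{\mathrm{R}}}(f_{\mathrm{L}}(x))$. Then for any input $x$, with probability at least $1-\alpha$,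 $g_{\mathrm{SPLITZ}}$ has a certified radius at $x$ of at least $$R_{g_{\mathrm{SPLITZ}}}(x)=\max_{\gamma\ge 0}\ \min\left\{\frac{R_{f_{\mathrm{R}}}(f_{\mathrm{L}}(x))}{L^{(\gamma)}_{f_{\mathrm{L}}}(x)},\ \gamma\right\},$$ that is, $g_{\mathrm{SPLITZ}}(x')=g_{\mathrm{SPLITZ}}(x)$ for all $x'$ with $\|x'-x\|_p\le R_{g_{\mathrm{SPLITZ}}}(x)$.
   Context: For a function $h$ with domain in $\mathbb{R}^d$ and vector-valued output, the $\gamma$-local Lipschitz constant of $h$ at $x$ (with respect to the $\ell_p$ norm) is $L^{(\gamma)}_h(x)=\sup_{y\in B(x,\gamma),\,y\neq x}\frac{\|h(y)-h(x)\|_p}{\|y-x\|_p}$, where $B(x,\gamma)=\{u:\|u-x\|_p\le\gamma\}$. A classifier $g$ has certified radius $R$ at $x$ (with probability at least $1-\alpha$, the probability being over the randomness of the classifier) if, with that probability, $g(x')=g(x)$ for all $x'=x+\delta$ with $\|\delta\|_p\le R$. When the noise is Gaussian, the radius of the smoothed right half can be taken as the randomized-smoothing radius $\frac{\sigma}{2}\big(\Phi^{-1}(\underline{p_A})-\Phi^{-1}(\overline{p_B})\big)$, where $\underline{p_A}$ lower-bounds the probability of the top class and $\overline{p_B}$ upper-bounds the probability of the runner-up class, and $\Phi$ is the standard normal CDF. *)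

theory Defs
  imports "HOL-Analysis.Analysis" "HOL-Probability.Probability"
begin

definition pnorm :: "real \<Rightarrow> real ^ 'n \<Rightarrow> real" where
  "pnorm p v = (\<Sum>i\<in>UNIV. \<bar>v $ i\<bar> powr p) powr (1 / p)"

definition gauss :: "real \<Rightarrow> (real ^ 'm) measure" where
  "gauss \<sigma> = density lborel (\<lambda>\<delta>. ennreal (\<Prod>i\<in>UNIV. normal_density 0 \<sigma> (\<delta> $ i)))"

text \<open>Smoothed right half: g~(u) = argmax over c in {1..C} of P_delta(fR(u + delta) = c).
  Ties are broken by Hilbert choice.\<close>
definition smooth_right :: "(real ^ 'm \<Rightarrow> nat) \<Rightarrow> real \<Rightarrow> nat \<Rightarrow> real ^ 'm \<Rightarrow> nat" where
  "smooth_right fR \<sigma> C u =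
     (SOME c. c \<in> {1..C} \<and>
        (\<forall>c'\<in>{1..C}. measure (gauss \<sigma>) {\<delta>. fR (u + \<delta>) = c'}
                      \<le> measure (gauss \<sigma>) {\<delta>. fR (u + \<delta>) = c}))"

definition splitz :: "(real ^ 'd \<Rightarrow> real ^ 'm) \<Rightarrow> (real ^ 'm \<Rightarrow> nat) \<Rightarrow> real \<Rightarrow> nat \<Rightarrow> real ^ 'd \<Rightarrow> nat" where
  "splitz fL fR \<sigma> C x =
     (SOME c. c \<in> {1..C} \<and>
        (\<forall>c'\<in>{1..C}. measure (gauss \<sigma>) {\<delta>. fR (fL x + \<delta>) = c'}
                      \<le> measure (gauss \<sigma>) {\<delta>. fR (fL x + \<delta>) = c}))"

definition local_lip :: "real \<Rightarrow> real \<Rightarrow> (real ^ 'd \<Rightarrow> real ^ 'm) \<Rightarrow> real ^ 'd \<Rightarrow> ereal" where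
  "local_lip p \<gamma> h x =
     (SUP y \<in> {y. pnorm p (y - x) \<le> \<gamma> \<and> y \<noteq> x}.
        ereal (pnorm p (h y - h x) / pnorm p (y - x)))"

end

theory Submission
  imports Defs
begin

text \<open>
  The SPLITZ classifier is the smoothed right half composed with the left half, so it suffices
  that every admissible x' is mapped by fL into the certified ball of radius R around fL x.
  For x' \<noteq> x with \<parallel>x' - x\<parallel> \<le> \<gamma>, the difference quotient of fL at x' is at most
  L, the \<gamma>-local Lipschitz constant of fL at x, hence \<parallel>fL x' - fL x\<parallel> \<le> L \<parallel>x' - x\<parallel> \<le> L (R / L) = R.
\<close>

lemma pnorm_nonneg: "0 \<le> pnorm p v"
  unfolding pnorm_def by simp

lemma pnorm_pos:
  assumes "v \<noteq> 0"
  shows "0 < pnorm p v"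
proof -
  obtain i where "v $ i \<noteq> 0" using assms by (metis vec_eq_iff zero_index)
  then have "0 < \<bar>v $ i\<bar> powr p" by simp
  also have "\<dots> \<le> (\<Sum>j\<in>UNIV. \<bar>v $ j\<bar> powr p)"
    by (rule member_le_sum) auto
  finally show ?thesis unfolding pnorm_def by simp
qed

text \<open>
  In ereal, R / 0 is \<infinity>, 0 or -\<infinity> according to the sign of R, and R / \<infinity> = 0;
  these cases are excluded by the hypotheses rather than by a finiteness assumption on L.
\<close>
lemma ereal_le_of_quotient_le_le_divide:
  fixes L :: ereal and R n d :: real
  assumes "0 < d" "0 \<le> n" "ereal (n / d) \<le> L" "ereal d \<le> ereal R / L"
  shows "n \<le> R"
proof (cases L)
  case (real l)
  have "0 \<le> n / d" using assms(1,2) by simp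
  then have "0 \<le> l" using assms(3) real by simp
  show ?thesis
  proof (cases "l = 0")
    case True
    then have "n = 0" using assms(1-3) real by (simp add: divide_le_0_iff)
    moreover have "0 \<le> R"
    proof (rule ccontr)
      assume "\<not> 0 \<le> R"
      then have "ereal R / L = - \<infinity>" using True real by (simp add: divide_ereal_def)
      then show False using assms(4) by simp
    qed
    ultimately show ?thesis by simp
  next
    case False
    then have "d * l \<le> R" using assms(4) real \<open>0 \<le> l\<close> by (simp add: field_simps)
    moreover have "n \<le> d * l" using assms(1,3) real by (simp add: field_simps)
    ultimately show ?thesis by simp
  qed
qed (use assms in auto)

lemma local_lip_ge_quotient:
  assumes "pnorm p (y - x) \<le> \<gamma>" "y \<noteq> x"
  shows "ereal (pnorm p (h y - h x) / pnorm p (y - x)) \<le> local_lip p \<gamma> h x"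
  unfolding local_lip_def using assms by (intro SUP_upper) auto

lemma pnorm_diff_le_of_local_lip:
  assumes "y \<noteq> x"
    and "ereal (pnorm p (y - x)) \<le> min (ereal R / local_lip p \<gamma> h x) (ereal \<gamma>)"
  shows "pnorm p (h y - h x) \<le> R"
proof (rule ereal_le_of_quotient_le_le_divide)
  show "0 < pnorm p (y - x)" using assms(1) by (simp add: pnorm_pos)
  show "ereal (pnorm p (h y - h x) / pnorm p (y - x)) \<le> local_lip p \<gamma> h x"
    using assms by (intro local_lip_ge_quotient) auto
  show "ereal (pnorm p (y - x)) \<le> ereal R / local_lip p \<gamma> h x"
    using assms(2) by simp
qed (rule pnorm_nonneg)

lemma comp_eq_of_local_lip:
  assumes "\<forall>u. pnorm p (u - h x) \<le> R \<longrightarrow> g u = g (h x)"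
    and "ereal (pnorm p (y - x)) \<le> min (ereal R / local_lip p \<gamma> h x) (ereal \<gamma>)"
  shows "g (h y) = g (h x)"
proof (cases "y = x")
  case False
  then have "pnorm p (h y - h x) \<le> R" using assms(2) by (rule pnorm_diff_le_of_local_lip)
  then show ?thesis using assms(1) by blast
qed simp

lemma splitz_eq_smooth_right: "splitz fL fR \<sigma> C x = smooth_right fR \<sigma> C (fL x)"
  unfolding splitz_def smooth_right_def by simp

theorem theorem1:
  fixes p \<sigma> \<alpha> :: real and C :: nat
    and fL :: "real ^ 'd \<Rightarrow> real ^ 'm" and fR :: "real ^ 'm \<Rightarrow> nat"
    and x :: "real ^ 'd"
    and M :: "'w measure" and R :: "'w \<Rightarrow> real"
  assumes "p \<ge> 1" and "\<sigma> > 0"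
    and "\<forall>u. fR u \<in> {1..C}"
    and "prob_space M"
    and "\<exists>A\<in>sets M. measure M A \<ge> 1 - \<alpha> \<and>
           (\<forall>\<omega>\<in>A. \<forall>u'. pnorm p (u' - fL x) \<le> R \<omega> \<longrightarrow>
                 smooth_right fR \<sigma> C u' = smooth_right fR \<sigma> C (fL x))"
  shows "\<exists>A\<in>sets M. measure M A \<ge> 1 - \<alpha> \<and>
           (\<forall>\<omega>\<in>A. \<forall>\<gamma>\<ge>0. \<forall>x'.
              ereal (pnorm p (x' - x)) \<le> min (ereal (R \<omega>) / local_lip p \<gamma> fL x) (ereal \<gamma>)
              \<longrightarrow> splitz fL fR \<sigma> C x' = splitz fL fR \<sigma> C x)"
proof -
  obtain A where "A \<in> sets M" "measure M A \<ge> 1 - \<alpha>"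
    and certified: "\<forall>\<omega>\<in>A. \<forall>u'. pnorm p (u' - fL x) \<le> R \<omega> \<longrightarrow>
                 smooth_right fR \<sigma> C u' = smooth_right fR \<sigma> C (fL x)"
    using assms(5) by blast
  moreover have "splitz fL fR \<sigma> C x' = splitz fL fR \<sigma> C x"
    if "\<omega> \<in> A"
      and "ereal (pnorm p (x' - x)) \<le> min (ereal (R \<omega>) / local_lip p \<gamma> fL x) (ereal \<gamma>)"
    for \<omega> \<gamma> x'
    unfolding splitz_eq_smooth_right
    using certified that by (intro comp_eq_of_local_lip) auto
  ultimately show ?thesis by blast
qed

end
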